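(* Let $X$ be a locally compact metric space and $\Gamma$ a pseudo*group of local homeomorphisms of $X$ which is minimal and equicontinuous. Let $X_0$ be a relatively compact open subset of $X$, and fix $\chi\in C_c(X)_{>0}$ with $\chi=1$ on $X_0$. For $\zeta\in C_c(X)_{\ge0}$ and $\psi\in C_c(X)_{>0}$ set $$(\zeta:\psi)=\inf\Big\{\sum_{i=1}^n c_i \;\Big|\; \zeta\le\sum_{i=1}^n c_i\,\psi\circ\gamma_i^{-1},\ c_i>0,\ \gamma_i\in\Gamma,\ n\in\mathbb N\Big\}$$ and $L_\psi(\zeta)=(\zeta:\psi)/(\chi:\psi)$. If $\eta>0$ and $\xi,\xi'\in C_c(X)_{\ge0}$ satisfy $\xi+\xi'=\chi$, then there is $\delta>0$ such that for every $\psi\in C_c(X)_{>0}$ with $\mathrm{diam}(\mathrm{supp}\,\psi)<\delta$ and every $\zeta\in C_c(X_0)_{\ge0}$ we have $$L_\psi(\xi\zeta)+L_\psi(\xi'\zeta)\le(1+2\eta)L_\psi(\zeta).$$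
   Context: A local homeomorphism of $X$ is a homeomorphism $\gamma$ from an open subset $\mathrm{Dom}(\gamma)$ onto an open subset $\mathrm{Range}(\gamma)$. A pseudo*group is a set $\Gamma$ of local homeomorphisms such that: (1) if $\gamma\in\Gamma$ and $U\subset\mathrm{Dom}(\gamma)$ is open then $\gamma|_U\in\Gamma$; (2) the identity of $X$ is in $\Gamma$; (3) if $\gamma,\gamma'\in\Gamma$ and $\mathrm{Dom}(\gamma')=\mathrm{Range}(\gamma)$ then $\gamma'\circ\gamma\in\Gamma$; (4) if $\gamma\in\Gamma$ then $\gamma^{-1}\in\Gamma$. Minimal: every orbit $\{\gamma x\mid\gamma\in\Gamma,x\in\mathrm{Dom}(\gamma)\}$ is dense. Equicontinuous: for every $\epsilon>0$ there is $\delta(\epsilon)>0$ with $d(\gamma x,\gamma x')\le\epsilon$ whenever $\gamma\in\Gamma$, $x,x'\in\mathrm{Dom}(\gamma)$, $d(x,x')<\delta(\epsilon)$. $C_c(X)$ is the space of real continuous compactly supported functions on $X$; $C_c(X)_{\ge0}=\{\zeta\in C_c(X)\mid\zeta\ge0\}$; $C_c(X)_{>0}=\{\zeta\in C_c(X)_{\ge0}\mid\zeta(x)>0$ for some $x\}$; $C_c(X_0)_{\ge0}$ denotes the nonnegative continuous functions with compact support contained in $X_0$ (viewed as functions on $X$ vanishing outside $X_0$). For $\psi\in C_c(X)$ and $\gamma\in\Gamma$, $\psi\circ\gamma^{-1}$ denotes the function on $X$ equal to $\psi(\gamma^{-1}x)$ on $\mathrm{Range}(\gamma)$ and $0$ outside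 $\mathrm{Range}(\gamma)$. *)

theory Defs
  imports "HOL-Analysis.Analysis"
begin

text \<open>The space X is the whole type 'a (a metric space). A local homeomorphism is
  represented as a partial map 'a \<Rightarrow> 'a option: Dom = dom, Range = ran.\<close>

definition local_homeo :: "('a::topological_space \<rightharpoonup> 'a) \<Rightarrow> bool" where
  "local_homeo \<gamma> \<longleftrightarrow> open (dom \<gamma>) \<and> open (ran \<gamma>) \<and>
     (\<exists>g. homeomorphism (dom \<gamma>) (ran \<gamma>) (\<lambda>x. the (\<gamma> x)) g)"

definition inv_map :: "('a \<rightharpoonup> 'a) \<Rightarrow> ('a \<rightharpoonup> 'a)" where
  "inv_map \<gamma> y = (if y \<in> ran \<gamma> then Some (inv_into (dom \<gamma>) (\<lambda>x. the (\<gamma> x)) y) else None)"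

definition pseudo_star_group :: "('a::topological_space \<rightharpoonup> 'a) set \<Rightarrow> bool" where
  "pseudo_star_group \<Gamma> \<longleftrightarrow>
     (\<forall>\<gamma>\<in>\<Gamma>. local_homeo \<gamma>) \<and>
     (\<forall>\<gamma>\<in>\<Gamma>. \<forall>U. open U \<and> U \<subseteq> dom \<gamma> \<longrightarrow> \<gamma> |` U \<in> \<Gamma>) \<and>
     Some \<in> \<Gamma> \<and>
     (\<forall>\<gamma>\<in>\<Gamma>. \<forall>\<gamma>'\<in>\<Gamma>. dom \<gamma>' = ran \<gamma> \<longrightarrow> \<gamma>' \<circ>\<^sub>m \<gamma> \<in> \<Gamma>) \<and>
     (\<forall>\<gamma>\<in>\<Gamma>. inv_map \<gamma> \<in> \<Gamma>)"

definition orbit :: "('a \<rightharpoonup> 'a) set \<Rightarrow> 'a \<Rightarrow> 'a set" where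
  "orbit \<Gamma> x = {the (\<gamma> x) | \<gamma>. \<gamma> \<in> \<Gamma> \<and> x \<in> dom \<gamma>}"

definition minimal_pg :: "('a::topological_space \<rightharpoonup> 'a) set \<Rightarrow> bool" where
  "minimal_pg \<Gamma> \<longleftrightarrow> (\<forall>x. closure (orbit \<Gamma> x) = UNIV)"

definition equicontinuous_pg :: "('a::metric_space \<rightharpoonup> 'a) set \<Rightarrow> bool" where
  "equicontinuous_pg \<Gamma> \<longleftrightarrow> (\<forall>\<epsilon>>0. \<exists>\<delta>>0. \<forall>\<gamma>\<in>\<Gamma>. \<forall>x\<in>dom \<gamma>. \<forall>x'\<in>dom \<gamma>.
      dist x x' < \<delta> \<longrightarrow> dist (the (\<gamma> x)) (the (\<gamma> x')) \<le> \<epsilon>)"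

definition csupp :: "('a::topological_space \<Rightarrow> real) \<Rightarrow> 'a set" where
  "csupp f = closure {x. f x \<noteq> 0}"

definition Cc :: "('a::topological_space \<Rightarrow> real) set" where
  "Cc = {f. continuous_on UNIV f \<and> compact (csupp f)}"

definition Cc_nonneg :: "('a::topological_space \<Rightarrow> real) set" where
  "Cc_nonneg = {f \<in> Cc. \<forall>x. f x \<ge> 0}"

definition Cc_pos :: "('a::topological_space \<Rightarrow> real) set" where
  "Cc_pos = {f \<in> Cc_nonneg. \<exists>x. f x > 0}"

definition Cc_nonneg_on :: "'a::topological_space set \<Rightarrow> ('a \<Rightarrow> real) set" where
  "Cc_nonneg_on X0 = {f \<in> Cc_nonneg. csupp f \<subseteq> X0}"

definition transl :: "('a \<Rightarrow> real) \<Rightarrow> ('a \<rightharpoonup> 'a) \<Rightarrow> 'a \<Rightarrow> real" where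
  "transl \<psi> \<gamma> x = (if x \<in> ran \<gamma> then \<psi> (the (inv_map \<gamma> x)) else 0)"

definition cover_num :: "('a \<rightharpoonup> 'a) set \<Rightarrow> ('a \<Rightarrow> real) \<Rightarrow> ('a \<Rightarrow> real) \<Rightarrow> real" where
  "cover_num \<Gamma> \<zeta> \<psi> = Inf {(\<Sum>i<n. c i) | (n::nat) c g.
      (\<forall>i<n. c i > 0 \<and> g i \<in> \<Gamma>) \<and> (\<forall>x. \<zeta> x \<le> (\<Sum>i<n. c i * transl \<psi> (g i) x))}"

definition L_fun :: "('a \<rightharpoonup> 'a) set \<Rightarrow> ('a \<Rightarrow> real) \<Rightarrow> ('a \<Rightarrow> real) \<Rightarrow> ('a \<Rightarrow> real) \<Rightarrow> real" where
  "L_fun \<Gamma> chi \<psi> \<zeta> = cover_num \<Gamma> \<zeta> \<psi> / cover_num \<Gamma> chi \<psi>"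

end

theory Submission
  imports Defs
begin

text \<open>Take any covering \<open>\<zeta> \<le> \<Sum>\<^sub>i c\<^sub>i \<psi>\<circ>\<gamma>\<^sub>i\<inverse>\<close>. By equicontinuity, if the support of \<open>\<psi>\<close> is
  small then so is the support of every translate \<open>\<psi>\<circ>\<gamma>\<^sub>i\<inverse>\<close>, and by uniform continuity
  \<open>\<xi>\<close> and \<open>\<xi>'\<close> vary by less than \<open>\<eta>\<close> there. Hence \<open>\<xi>\<zeta>\<close> and \<open>\<xi>'\<zeta>\<close> are covered by the same
  translates with coefficients \<open>c\<^sub>i(\<xi>(p\<^sub>i) + \<eta>)\<close> and \<open>c\<^sub>i(\<xi>'(p\<^sub>i) + \<eta>)\<close>, where \<open>p\<^sub>i\<close> is a point
  of the i-th translate at which \<open>\<zeta> > 0\<close>; there \<open>\<xi> + \<xi>' = \<chi> = 1\<close>, so the new coefficients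
  add up to \<open>(1 + 2\<eta>) \<Sum>\<^sub>i c\<^sub>i\<close>. Minimality is only needed to make the infima meaningful:
  it guarantees that every compactly supported function admits a covering.\<close>

lemma csupp_memI: "f x \<noteq> 0 \<Longrightarrow> x \<in> csupp f"
  unfolding csupp_def by (rule closure_subset[THEN subsetD]) simp

lemma notin_csupp_imp_zero: "x \<notin> csupp f \<Longrightarrow> f x = 0"
  using csupp_memI by blast

lemma Cc_uniformly_continuous:
  fixes f :: "'a::metric_space \<Rightarrow> real"
  assumes "f \<in> Cc"
  shows "uniformly_continuous_on UNIV f"
  unfolding uniformly_continuous_on_def
proof (intro allI impI)
  fix e :: real assume "e > 0"
  have K: "compact (csupp f)" and cont: "continuous_on UNIV f"
    using assms by (auto simp: Cc_def)
  define \<G> where "\<G> = {ball x r | x r. \<forall>y\<in>ball x r. dist (f y) (f x) < e/2}"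
  have "csupp f \<subseteq> \<Union>\<G>"
  proof
    fix x
    obtain r where "r > 0" "\<forall>y. dist y x < r \<longrightarrow> dist (f y) (f x) < e/2"
      using cont \<open>e > 0\<close> unfolding continuous_on_iff by (meson UNIV_I half_gt_zero)
    then have "\<forall>y\<in>ball x r. dist (f y) (f x) < e/2"
      by (metis mem_ball dist_commute)
    then have "ball x r \<in> \<G>"
      unfolding \<G>_def by blast
    moreover have "x \<in> ball x r" using \<open>r > 0\<close> by simp
    ultimately show "x \<in> \<Union>\<G>" by blast
  qed
  then obtain d where "d > 0" and d: "\<And>x. x \<in> csupp f \<Longrightarrow> \<exists>G\<in>\<G>. ball x d \<subseteq> G"
    by (rule Heine_Borel_lemma[OF K]) (auto simp: \<G>_def)
  have near_support: "dist (f y) (f x) < e" if x: "x \<in> csupp f" and xy: "dist x y < d" for x y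
  proof -
    obtain z r where "ball x d \<subseteq> ball z r" and z: "\<forall>w\<in>ball z r. dist (f w) (f z) < e/2"
      using d[OF x] by (auto simp: \<G>_def)
    moreover have "x \<in> ball x d" "y \<in> ball x d" using \<open>d > 0\<close> xy by auto
    ultimately have "dist (f x) (f z) < e/2" "dist (f y) (f z) < e/2" by blast+
    then show ?thesis by (metis dist_triangle_half_l)
  qed
  show "\<exists>d>0. \<forall>x\<in>UNIV. \<forall>x'\<in>UNIV. dist x' x < d \<longrightarrow> dist (f x') (f x) < e"
  proof (intro exI[of _ d] conjI ballI impI)
    fix x x' :: 'a assume "dist x' x < d"
    then show "dist (f x') (f x) < e"
      using near_support[of x x'] near_support[of x' x] notin_csupp_imp_zero[of x f]
        notin_csupp_imp_zero[of x' f] \<open>e > 0\<close>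
      by (cases "x \<in> csupp f"; cases "x' \<in> csupp f") (auto simp: dist_commute)
  qed (fact \<open>d > 0\<close>)
qed

lemma Cc_oscillation_bound:
  fixes f :: "'a::metric_space \<Rightarrow> real"
  assumes "f \<in> Cc" and "0 < \<eta>"
  obtains d where "0 < d" "\<And>x y. dist x y < d \<Longrightarrow> f x \<le> f y + \<eta>"
proof -
  obtain d where "0 < d" and d: "\<And>x y. dist y x < d \<Longrightarrow> dist (f y) (f x) < \<eta>"
    by (rule uniformly_continuous_onE[OF Cc_uniformly_continuous[OF \<open>f \<in> Cc\<close>] \<open>0 < \<eta>\<close>]) auto
  have "f x \<le> f y + \<eta>" if "dist x y < d" for x y
    using d[of y x] that by (simp add: dist_commute dist_real_def abs_less_iff)
  then show ?thesis using that \<open>0 < d\<close> by blast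
qed

lemma inv_map_ran:
  assumes "y \<in> ran \<gamma>"
  shows "the (inv_map \<gamma> y) \<in> dom \<gamma>" "the (\<gamma> (the (inv_map \<gamma> y))) = y"
proof -
  from assms have "y \<in> (\<lambda>x. the (\<gamma> x)) ` dom \<gamma>"
    by (force simp: ran_def)
  then show "the (inv_map \<gamma> y) \<in> dom \<gamma>" "the (\<gamma> (the (inv_map \<gamma> y))) = y"
    using assms by (simp_all add: inv_map_def inv_into_into f_inv_into_f[where f="\<lambda>x. the (\<gamma> x)"])
qed

lemma transl_nonneg: "(\<And>x. \<psi> x \<ge> 0) \<Longrightarrow> transl \<psi> \<gamma> y \<ge> 0"
  by (simp add: transl_def)

lemma transl_nonzero_imp_ran: "transl \<psi> \<gamma> y \<noteq> 0 \<Longrightarrow> y \<in> ran \<gamma>"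
  by (auto simp: transl_def split: if_splits)

lemma transl_inv_map:
  assumes inj: "inj_on (\<lambda>x. the (\<gamma> x)) (dom \<gamma>)" and y: "y \<in> dom \<gamma>"
  shows "transl \<psi> (inv_map \<gamma>) y = \<psi> (the (\<gamma> y))"
proof -
  let ?f = "\<lambda>x. the (\<gamma> x)"
  have "ran \<gamma> = ?f ` dom \<gamma>" by (force simp: ran_def)
  then have bij: "bij_betw ?f (dom \<gamma>) (ran \<gamma>)" using inj by (simp add: bij_betw_def)
  have "inv_map \<gamma> (?f y) = Some y"
    using bij_betwE[OF bij] y by (simp add: inv_map_def inv_into_f_f[OF inj y])
  then have y_ran: "y \<in> ran (inv_map \<gamma>)" by (auto simp: ran_def)
  have "dom (inv_map \<gamma>) = ran \<gamma>" by (auto simp: inv_map_def split: if_splits)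
  then have "the (inv_map (inv_map \<gamma>) y) = inv_into (ran \<gamma>) (inv_into (dom \<gamma>) ?f) y"
    using y_ran by (simp add: inv_map_def inv_into_def cong: conj_cong)
  also have "\<dots> = ?f y" using inv_into_inv_into_eq[OF bij y] .
  finally show ?thesis using y_ran by (simp add: transl_def)
qed

definition covering_sums :: "('a \<rightharpoonup> 'a) set \<Rightarrow> ('a \<Rightarrow> real) \<Rightarrow> ('a \<Rightarrow> real) \<Rightarrow> real set" where
  "covering_sums \<Gamma> \<zeta> \<psi> = {(\<Sum>i<n. c i) | (n::nat) c g.
      (\<forall>i<n. c i > 0 \<and> g i \<in> \<Gamma>) \<and> (\<forall>x. \<zeta> x \<le> (\<Sum>i<n. c i * transl \<psi> (g i) x))}"

lemma cover_num_eq_Inf: "cover_num \<Gamma> \<zeta> \<psi> = Inf (covering_sums \<Gamma> \<zeta> \<psi>)"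
  by (simp add: cover_num_def covering_sums_def)

lemma covering_sumsI:
  fixes n :: nat
  assumes "\<forall>i<n. c i > 0 \<and> g i \<in> \<Gamma>" and "\<forall>x. \<zeta> x \<le> (\<Sum>i<n. c i * transl \<psi> (g i) x)"
  shows "(\<Sum>i<n. c i) \<in> covering_sums \<Gamma> \<zeta> \<psi>"
  unfolding covering_sums_def using assms by blast

lemma covering_sums_nonneg: "s \<in> covering_sums \<Gamma> \<zeta> \<psi> \<Longrightarrow> s \<ge> 0"
  unfolding covering_sums_def by (auto intro!: sum_nonneg simp: less_imp_le)

lemma cover_num_le:
  fixes n :: nat
  assumes "\<forall>i<n. c i > 0 \<and> g i \<in> \<Gamma>" and "\<forall>x. \<zeta> x \<le> (\<Sum>i<n. c i * transl \<psi> (g i) x)"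
  shows "cover_num \<Gamma> \<zeta> \<psi> \<le> (\<Sum>i<n. c i)"
  unfolding cover_num_eq_Inf
  by (rule cInf_lower[OF covering_sumsI[OF assms]]) (meson bdd_belowI covering_sums_nonneg)

lemma cover_num_nonneg: "covering_sums \<Gamma> \<zeta> \<psi> \<noteq> {} \<Longrightarrow> cover_num \<Gamma> \<zeta> \<psi> \<ge> 0"
  unfolding cover_num_eq_Inf by (rule cInf_greatest) (simp_all add: covering_sums_nonneg)

lemma translate_exceeds_near:
  assumes pg: "pseudo_star_group \<Gamma>" and min: "minimal_pg \<Gamma>"
    and cont: "continuous_on UNIV \<psi>" and "a < \<psi> p"
  obtains \<gamma> U where "\<gamma> \<in> \<Gamma>" "open U" "x \<in> U" "\<And>y. y \<in> U \<Longrightarrow> a < transl \<psi> \<gamma> y"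
proof -
  have "open {y. a < \<psi> y}" using cont by (simp add: open_Collect_less continuous_on_const)
  moreover have "p \<in> {y. a < \<psi> y} \<inter> closure (orbit \<Gamma> x)"
    using \<open>a < \<psi> p\<close> min by (simp add: minimal_pg_def)
  ultimately have "{y. a < \<psi> y} \<inter> orbit \<Gamma> x \<noteq> {}"
    using open_Int_closure_eq_empty by blast
  then obtain \<gamma> where \<gamma>: "\<gamma> \<in> \<Gamma>" "x \<in> dom \<gamma>" "a < \<psi> (the (\<gamma> x))"
    unfolding orbit_def by blast
  then obtain h where hom: "homeomorphism (dom \<gamma>) (ran \<gamma>) (\<lambda>x. the (\<gamma> x)) h" and "open (dom \<gamma>)"
    using pg by (auto simp: pseudo_star_group_def local_homeo_def)
  define U where "U = {y \<in> dom \<gamma>. a < \<psi> (the (\<gamma> y))}"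
  have "continuous_on (dom \<gamma>) (\<lambda>y. \<psi> (the (\<gamma> y)))"
    using hom by (intro continuous_on_compose2[OF cont]) (auto simp: homeomorphism_def)
  then have "open (dom \<gamma> \<inter> (\<lambda>y. \<psi> (the (\<gamma> y))) -` {a<..})"
    using \<open>open (dom \<gamma>)\<close> by (rule continuous_open_preimage) simp
  then have "open U" by (simp add: U_def Int_def)
  moreover have "transl \<psi> (inv_map \<gamma>) y = \<psi> (the (\<gamma> y))" if "y \<in> dom \<gamma>" for y
    using hom that by (intro transl_inv_map) (metis homeomorphism_def inj_on_inverseI)
  ultimately show ?thesis
    using that[of "inv_map \<gamma>" U] \<gamma> pg by (auto simp: U_def pseudo_star_group_def)
qed

lemma finite_translates_cover:
  assumes "pseudo_star_group \<Gamma>" "minimal_pg \<Gamma>" "continuous_on UNIV \<psi>" "a < \<psi> p"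
    and "compact K"
  obtains n :: nat and g where "\<forall>i<n. g i \<in> \<Gamma>" "\<forall>y\<in>K. \<exists>i<n. a < transl \<psi> (g i) y"
proof -
  have "\<forall>x. \<exists>\<gamma>. \<gamma> \<in> \<Gamma> \<and> (\<exists>U. open U \<and> x \<in> U \<and> (\<forall>y\<in>U. a < transl \<psi> \<gamma> y))"
    by (metis translate_exceeds_near[OF assms(1-4)])
  from choice[OF this] obtain G
    where G: "\<forall>x. G x \<in> \<Gamma> \<and> (\<exists>U. open U \<and> x \<in> U \<and> (\<forall>y\<in>U. a < transl \<psi> (G x) y))" ..
  then have "\<forall>x. \<exists>U. open U \<and> x \<in> U \<and> (\<forall>y\<in>U. a < transl \<psi> (G x) y)" by blast
  from choice[OF this] obtain U where U: "\<forall>x. open (U x) \<and> x \<in> U x \<and> (\<forall>y\<in>U x. a < transl \<psi> (G x) y)" ..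
  have cover: "K \<subseteq> (\<Union>x\<in>K. U x)" using U by blast
  obtain T where "T \<subseteq> K" "finite T" "K \<subseteq> (\<Union>x\<in>T. U x)"
    by (rule compactE_image[OF \<open>compact K\<close> _ cover]) (use U in auto)
  obtain xs where "set xs = T" using finite_list[OF \<open>finite T\<close>] by blast
  have "\<exists>i<length xs. a < transl \<psi> (G (xs ! i)) y" if "y \<in> K" for y
  proof -
    obtain x where "x \<in> set xs" "y \<in> U x"
      using \<open>y \<in> K\<close> \<open>K \<subseteq> (\<Union>x\<in>T. U x)\<close> \<open>set xs = T\<close> by blast
    then show ?thesis using U by (metis in_set_conv_nth)
  qed
  then show ?thesis
    using that[of "length xs" "\<lambda>i. G (xs ! i)"] G by blast
qed

lemma covering_sums_nonempty:
  assumes pg: "pseudo_star_group \<Gamma>" and min: "minimal_pg \<Gamma>" and f: "f \<in> Cc" and \<psi>: "\<psi> \<in> Cc_pos"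
  shows "covering_sums \<Gamma> f \<psi> \<noteq> {}"
proof -
  obtain p where "\<psi> p > 0" and cont: "continuous_on UNIV \<psi>" and \<psi>_nonneg: "\<And>x. \<psi> x \<ge> 0"
    using \<psi> by (auto simp: Cc_pos_def Cc_nonneg_def Cc_def)
  define a where "a = \<psi> p / 2"
  have "a > 0" "a < \<psi> p" using \<open>\<psi> p > 0\<close> by (auto simp: a_def)
  have K: "compact (csupp f)" and cont_f: "continuous_on UNIV f"
    using f by (auto simp: Cc_def)
  obtain n :: nat and g where g: "\<forall>i<n. g i \<in> \<Gamma>" and cov: "\<forall>y\<in>csupp f. \<exists>i<n. a < transl \<psi> (g i) y"
    by (rule finite_translates_cover[OF pg min cont \<open>a < \<psi> p\<close> K])
  obtain M where "M > 0" and M: "\<And>y. f y \<le> M"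
  proof -
    have "bounded (f ` csupp f)"
      using K cont_f by (meson compact_continuous_image compact_imp_bounded continuous_on_subset subset_UNIV)
    then obtain B where B: "\<forall>y\<in>csupp f. \<bar>f y\<bar> \<le> B" by (auto simp: bounded_real)
    have "f y \<le> max B 1" for y
      using B notin_csupp_imp_zero[of y f] by (cases "y \<in> csupp f") force+
    then show ?thesis using that[of "max B 1"] by simp
  qed
  have terms_nonneg: "0 \<le> M / a * transl \<psi> (g i) y" for i y
    using \<open>M > 0\<close> \<open>a > 0\<close> by (simp add: transl_nonneg[OF \<psi>_nonneg])
  have "f y \<le> (\<Sum>i<n. M / a * transl \<psi> (g i) y)" for y
  proof (cases "y \<in> csupp f")
    case True
    then obtain j where "j < n" "a < transl \<psi> (g j) y" using cov by blast
    have "f y \<le> M / a * a" using M[of y] \<open>a > 0\<close> by simp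
    also have "\<dots> \<le> M / a * transl \<psi> (g j) y"
      using \<open>a < transl \<psi> (g j) y\<close> \<open>M > 0\<close> \<open>a > 0\<close> by (intro mult_left_mono) simp_all
    also have "\<dots> \<le> (\<Sum>i<n. M / a * transl \<psi> (g i) y)"
      using \<open>j < n\<close> by (intro member_le_sum terms_nonneg) simp_all
    finally show ?thesis .
  next
    case False
    have "0 \<le> (\<Sum>i<n. M / a * transl \<psi> (g i) y)" by (rule sum_nonneg) (rule terms_nonneg)
    then show ?thesis using False by (simp add: notin_csupp_imp_zero)
  qed
  then have "(\<Sum>i<n. M / a) \<in> covering_sums \<Gamma> f \<psi>"
    using g \<open>M > 0\<close> \<open>a > 0\<close> by (intro covering_sumsI allI) auto
  then show ?thesis by blast
qed

lemma mult_le_weighted_cover: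
  fixes t :: "nat \<Rightarrow> 'a \<Rightarrow> real" and n :: nat
  assumes cover: "\<zeta> x \<le> (\<Sum>i<n. c i * t i x)"
    and "0 \<le> \<zeta> x" "0 \<le> F x" and c: "\<forall>i<n. 0 \<le> c i" and t: "\<forall>i. 0 \<le> t i x"
    and bound: "\<And>i. i < n \<Longrightarrow> 0 < \<zeta> x \<Longrightarrow> 0 < t i x \<Longrightarrow> F x \<le> w i"
    and w: "\<forall>i<n. 0 \<le> w i"
  shows "F x * \<zeta> x \<le> (\<Sum>i<n. c i * w i * t i x)"
proof (cases "\<zeta> x = 0")
  case True
  then show ?thesis using c t w by (auto intro!: sum_nonneg)
next
  case False
  then have "0 < \<zeta> x" using \<open>0 \<le> \<zeta> x\<close> by simp
  have "F x * \<zeta> x \<le> (\<Sum>i<n. F x * (c i * t i x))"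
    using mult_left_mono[OF cover \<open>0 \<le> F x\<close>] by (simp add: sum_distrib_left)
  also have "\<dots> \<le> (\<Sum>i<n. c i * w i * t i x)"
  proof (rule sum_mono)
    fix i assume "i \<in> {..<n}"
    show "F x * (c i * t i x) \<le> c i * w i * t i x"
    proof (cases "t i x = 0")
      case False
      then have "F x \<le> w i"
        using bound \<open>i \<in> {..<n}\<close> \<open>0 < \<zeta> x\<close> t by (simp add: order_less_le)
      then have "F x * (c i * t i x) \<le> w i * (c i * t i x)"
        using c t \<open>i \<in> {..<n}\<close> by (intro mult_right_mono) simp_all
      then show ?thesis by (simp add: mult_ac)
    qed simp
  qed
  finally show ?thesis .
qed

lemma partition_weighted_covers:
  fixes t :: "nat \<Rightarrow> 'a \<Rightarrow> real" and n :: nat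
  assumes cover: "\<forall>x. \<zeta> x \<le> (\<Sum>i<n. c i * t i x)" and c: "\<forall>i<n. 0 < c i"
    and \<zeta>: "\<forall>x. 0 \<le> \<zeta> x" and t: "\<forall>i x. 0 \<le> t i x"
    and F1: "\<forall>x. 0 \<le> F1 x" and F2: "\<forall>x. 0 \<le> F2 x"
    and partition: "\<And>x. 0 < \<zeta> x \<Longrightarrow> F1 x + F2 x = 1"
    and osc1: "\<And>i x y. i < n \<Longrightarrow> 0 < t i x \<Longrightarrow> 0 < t i y \<Longrightarrow> F1 x \<le> F1 y + \<eta>"
    and osc2: "\<And>i x y. i < n \<Longrightarrow> 0 < t i x \<Longrightarrow> 0 < t i y \<Longrightarrow> F2 x \<le> F2 y + \<eta>"
    and "0 < \<eta>"
  obtains w1 w2 where "\<forall>i<n. 0 < c i * w1 i" "\<forall>i<n. 0 < c i * w2 i"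
    "\<forall>x. F1 x * \<zeta> x \<le> (\<Sum>i<n. c i * w1 i * t i x)"
    "\<forall>x. F2 x * \<zeta> x \<le> (\<Sum>i<n. c i * w2 i * t i x)"
    "(\<Sum>i<n. c i * w1 i) + (\<Sum>i<n. c i * w2 i) \<le> (1 + 2 * \<eta>) * (\<Sum>i<n. c i)"
proof -
  define meets where "meets i \<longleftrightarrow> (\<exists>x. 0 < \<zeta> x \<and> 0 < t i x)" for i
  define p where "p i = (SOME x. 0 < \<zeta> x \<and> 0 < t i x)" for i
  have p: "0 < \<zeta> (p i) \<and> 0 < t i (p i)" if "meets i" for i
    using that unfolding meets_def p_def by (rule someI_ex)
  \<comment> \<open>Terms missing \<open>{\<zeta> > 0}\<close> keep the weight \<open>\<eta>\<close> only because covering coefficients must be positive.\<close>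
  define w1 where "w1 i = (if meets i then F1 (p i) + \<eta> else \<eta>)" for i
  define w2 where "w2 i = (if meets i then F2 (p i) + \<eta> else \<eta>)" for i
  have w_pos: "0 < w1 i" "0 < w2 i" for i
    using F1 F2 \<open>0 < \<eta>\<close> by (simp_all add: w1_def w2_def add_nonneg_pos)
  have "F1 x \<le> w1 i" "F2 x \<le> w2 i" if "i < n" "0 < \<zeta> x" "0 < t i x" for i x
  proof -
    have "meets i" using that by (auto simp: meets_def)
    then show "F1 x \<le> w1 i" "F2 x \<le> w2 i"
      using osc1[OF that(1,3)] osc2[OF that(1,3)] p by (simp_all add: w1_def w2_def)
  qed
  then have covers: "F1 x * \<zeta> x \<le> (\<Sum>i<n. c i * w1 i * t i x)" "F2 x * \<zeta> x \<le> (\<Sum>i<n. c i * w2 i * t i x)" for x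
    using cover \<zeta> t F1 F2 c w_pos by (auto intro!: mult_le_weighted_cover simp: less_imp_le)
  have termwise: "c i * w1 i + c i * w2 i \<le> (1 + 2 * \<eta>) * c i" if "i < n" for i
  proof (cases "meets i")
    case True
    then have "F1 (p i) + F2 (p i) = 1" using p partition by blast
    moreover have "c i * w1 i + c i * w2 i = c i * (F1 (p i) + F2 (p i)) + 2 * \<eta> * c i"
      using True by (simp add: w1_def w2_def algebra_simps)
    ultimately show ?thesis by (simp add: algebra_simps)
  next
    case False
    then show ?thesis using c[rule_format, OF that] by (simp add: w1_def w2_def algebra_simps)
  qed
  have "(\<Sum>i<n. c i * w1 i) + (\<Sum>i<n. c i * w2 i) = (\<Sum>i<n. c i * w1 i + c i * w2 i)"
    by (simp add: sum.distrib)
  also have "\<dots> \<le> (\<Sum>i<n. (1 + 2 * \<eta>) * c i)"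
    by (rule sum_mono) (simp add: termwise)
  also have "\<dots> = (1 + 2 * \<eta>) * (\<Sum>i<n. c i)"
    by (simp add: sum_distrib_left)
  finally show ?thesis
    using that[of w1 w2] c w_pos covers by simp
qed

lemma cover_num_partition_le:
  assumes "covering_sums \<Gamma> \<zeta> \<psi> \<noteq> {}"
    and \<zeta>: "\<forall>x. 0 \<le> \<zeta> x" and \<psi>: "\<forall>x. 0 \<le> \<psi> x" and F1: "\<forall>x. 0 \<le> F1 x" and F2: "\<forall>x. 0 \<le> F2 x"
    and partition: "\<And>x. 0 < \<zeta> x \<Longrightarrow> F1 x + F2 x = 1"
    and osc1: "\<And>\<gamma> x y. \<gamma> \<in> \<Gamma> \<Longrightarrow> 0 < transl \<psi> \<gamma> x \<Longrightarrow> 0 < transl \<psi> \<gamma> y \<Longrightarrow> F1 x \<le> F1 y + \<eta>"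
    and osc2: "\<And>\<gamma> x y. \<gamma> \<in> \<Gamma> \<Longrightarrow> 0 < transl \<psi> \<gamma> x \<Longrightarrow> 0 < transl \<psi> \<gamma> y \<Longrightarrow> F2 x \<le> F2 y + \<eta>"
    and "0 < \<eta>"
  shows "cover_num \<Gamma> (\<lambda>x. F1 x * \<zeta> x) \<psi> + cover_num \<Gamma> (\<lambda>x. F2 x * \<zeta> x) \<psi>
           \<le> (1 + 2 * \<eta>) * cover_num \<Gamma> \<zeta> \<psi>"
proof -
  let ?lhs = "cover_num \<Gamma> (\<lambda>x. F1 x * \<zeta> x) \<psi> + cover_num \<Gamma> (\<lambda>x. F2 x * \<zeta> x) \<psi>"
  have "?lhs \<le> (1 + 2 * \<eta>) * s" if s_mem: "s \<in> covering_sums \<Gamma> \<zeta> \<psi>" for s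
  proof -
    obtain n :: nat and c g where s: "s = (\<Sum>i<n. c i)" and cg: "\<forall>i<n. 0 < c i \<and> g i \<in> \<Gamma>"
      and cover: "\<forall>x. \<zeta> x \<le> (\<Sum>i<n. c i * transl \<psi> (g i) x)"
      using s_mem unfolding covering_sums_def by blast
    obtain w1 w2 where w: "\<forall>i<n. 0 < c i * w1 i" "\<forall>i<n. 0 < c i * w2 i"
      and cover1: "\<forall>x. F1 x * \<zeta> x \<le> (\<Sum>i<n. c i * w1 i * transl \<psi> (g i) x)"
      and cover2: "\<forall>x. F2 x * \<zeta> x \<le> (\<Sum>i<n. c i * w2 i * transl \<psi> (g i) x)"
      and sum: "(\<Sum>i<n. c i * w1 i) + (\<Sum>i<n. c i * w2 i) \<le> (1 + 2 * \<eta>) * (\<Sum>i<n. c i)"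
      by (rule partition_weighted_covers[OF cover _ \<zeta> _ F1 F2 partition osc1 osc2 \<open>0 < \<eta>\<close>])
        (use cg \<psi> in \<open>auto intro: transl_nonneg\<close>)
    have "cover_num \<Gamma> (\<lambda>x. F1 x * \<zeta> x) \<psi> \<le> (\<Sum>i<n. c i * w1 i)"
      using w(1) cg cover1 by (intro cover_num_le) auto
    moreover have "cover_num \<Gamma> (\<lambda>x. F2 x * \<zeta> x) \<psi> \<le> (\<Sum>i<n. c i * w2 i)"
      using w(2) cg cover2 by (intro cover_num_le) auto
    ultimately show ?thesis unfolding s using sum by linarith
  qed
  then have "?lhs / (1 + 2 * \<eta>) \<le> Inf (covering_sums \<Gamma> \<zeta> \<psi>)"
    using \<open>covering_sums \<Gamma> \<zeta> \<psi> \<noteq> {}\<close> \<open>0 < \<eta>\<close>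
    by (intro cInf_greatest) (simp_all add: pos_divide_le_eq mult.commute)
  then show ?thesis
    using \<open>0 < \<eta>\<close> by (simp add: cover_num_eq_Inf pos_divide_le_eq mult.commute)
qed

lemma transl_nonzero_dist_le:
  assumes modulus: "\<forall>x\<in>dom \<gamma>. \<forall>x'\<in>dom \<gamma>. dist x x' < \<delta> \<longrightarrow> dist (the (\<gamma> x)) (the (\<gamma> x')) \<le> e"
    and "bounded (csupp \<psi>)" "diameter (csupp \<psi>) < \<delta>"
    and "transl \<psi> \<gamma> x \<noteq> 0" "transl \<psi> \<gamma> y \<noteq> 0"
  shows "dist x y \<le> e"
proof -
  have x: "x \<in> ran \<gamma>" and y: "y \<in> ran \<gamma>"
    using assms(4,5) by (simp_all add: transl_nonzero_imp_ran)
  let ?x = "the (inv_map \<gamma> x)" and ?y = "the (inv_map \<gamma> y)"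
  have "?x \<in> csupp \<psi>" "?y \<in> csupp \<psi>"
    using assms(4,5) x y by (simp_all add: transl_def csupp_memI)
  then have "dist ?x ?y < \<delta>"
    using diameter_bounded_bound[OF \<open>bounded (csupp \<psi>)\<close>] \<open>diameter (csupp \<psi>) < \<delta>\<close>
    by (meson le_less_trans)
  then have "dist (the (\<gamma> ?x)) (the (\<gamma> ?y)) \<le> e"
    using modulus inv_map_ran(1)[OF x] inv_map_ran(1)[OF y] by blast
  then show ?thesis using inv_map_ran(2)[OF x] inv_map_ran(2)[OF y] by simp
qed

lemma equicontinuous_small_translate_supports:
  assumes "equicontinuous_pg \<Gamma>" and "0 < e"
  obtains \<delta> where "0 < \<delta>"
    "\<And>\<psi> \<gamma> x y. \<gamma> \<in> \<Gamma> \<Longrightarrow> bounded (csupp \<psi>) \<Longrightarrow> diameter (csupp \<psi>) < \<delta> \<Longrightarrow>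
       transl \<psi> \<gamma> x \<noteq> 0 \<Longrightarrow> transl \<psi> \<gamma> y \<noteq> 0 \<Longrightarrow> dist x y \<le> e"
proof -
  obtain \<delta> where "0 < \<delta>" and
    \<delta>: "\<forall>\<gamma>\<in>\<Gamma>. \<forall>x\<in>dom \<gamma>. \<forall>x'\<in>dom \<gamma>. dist x x' < \<delta> \<longrightarrow> dist (the (\<gamma> x)) (the (\<gamma> x')) \<le> e"
    using assms unfolding equicontinuous_pg_def by blast
  show ?thesis
    using that[OF \<open>0 < \<delta>\<close>] transl_nonzero_dist_le[OF bspec[OF \<delta>]] by blast
qed

lemma L_fun_partition_le:
  assumes "pseudo_star_group \<Gamma>" and "minimal_pg \<Gamma>" and "chi \<in> Cc" and \<psi>: "\<psi> \<in> Cc_pos"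
    and \<zeta>: "\<zeta> \<in> Cc_nonneg" and "\<forall>x. 0 \<le> F1 x" and "\<forall>x. 0 \<le> F2 x"
    and "\<And>x. 0 < \<zeta> x \<Longrightarrow> F1 x + F2 x = 1"
    and "\<And>\<gamma> x y. \<gamma> \<in> \<Gamma> \<Longrightarrow> 0 < transl \<psi> \<gamma> x \<Longrightarrow> 0 < transl \<psi> \<gamma> y \<Longrightarrow> F1 x \<le> F1 y + \<eta>"
    and "\<And>\<gamma> x y. \<gamma> \<in> \<Gamma> \<Longrightarrow> 0 < transl \<psi> \<gamma> x \<Longrightarrow> 0 < transl \<psi> \<gamma> y \<Longrightarrow> F2 x \<le> F2 y + \<eta>"
    and "0 < \<eta>"
  shows "L_fun \<Gamma> chi \<psi> (\<lambda>x. F1 x * \<zeta> x) + L_fun \<Gamma> chi \<psi> (\<lambda>x. F2 x * \<zeta> x)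
           \<le> (1 + 2 * \<eta>) * L_fun \<Gamma> chi \<psi> \<zeta>"
proof -
  have "\<zeta> \<in> Cc" "\<forall>x. 0 \<le> \<zeta> x" "\<forall>x. 0 \<le> \<psi> x"
    using \<zeta> \<psi> by (auto simp: Cc_nonneg_def Cc_pos_def)
  then have "cover_num \<Gamma> (\<lambda>x. F1 x * \<zeta> x) \<psi> + cover_num \<Gamma> (\<lambda>x. F2 x * \<zeta> x) \<psi>
               \<le> (1 + 2 * \<eta>) * cover_num \<Gamma> \<zeta> \<psi>"
    using assms(6-11) covering_sums_nonempty[OF assms(1,2) \<open>\<zeta> \<in> Cc\<close> \<psi>]
    by (intro cover_num_partition_le) simp_all
  moreover have "0 \<le> cover_num \<Gamma> chi \<psi>"
    by (rule cover_num_nonneg[OF covering_sums_nonempty[OF assms(1-4)]])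
  ultimately show ?thesis
    by (simp add: L_fun_def add_divide_distrib[symmetric] divide_right_mono)
qed

theorem lemma1:
  fixes \<Gamma> :: "('a::metric_space \<rightharpoonup> 'a) set"
    and X0 :: "'a set" and chi \<xi> \<xi>' :: "'a \<Rightarrow> real" and \<eta> :: real
  assumes "locally_compact_space (euclidean :: 'a topology)"
    and "pseudo_star_group \<Gamma>" and "minimal_pg \<Gamma>" and "equicontinuous_pg \<Gamma>"
    and "open X0" and "compact (closure X0)"
    and "chi \<in> Cc_pos" and "\<forall>x\<in>X0. chi x = 1"
    and "\<eta> > 0"
    and "\<xi> \<in> Cc_nonneg" and "\<xi>' \<in> Cc_nonneg" and "\<forall>x. \<xi> x + \<xi>' x = chi x"
  shows "\<exists>\<delta>>0. \<forall>\<psi>\<in>Cc_pos. diameter (csupp \<psi>) < \<delta> \<longrightarrow>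
           (\<forall>\<zeta>\<in>Cc_nonneg_on X0.
              L_fun \<Gamma> chi \<psi> (\<lambda>x. \<xi> x * \<zeta> x) + L_fun \<Gamma> chi \<psi> (\<lambda>x. \<xi>' x * \<zeta> x)
                \<le> (1 + 2 * \<eta>) * L_fun \<Gamma> chi \<psi> \<zeta>)"
proof -
  have "chi \<in> Cc" and \<xi>: "\<xi> \<in> Cc" "\<forall>x. 0 \<le> \<xi> x" and \<xi>': "\<xi>' \<in> Cc" "\<forall>x. 0 \<le> \<xi>' x"
    using assms(7,10,11) by (auto simp: Cc_pos_def Cc_nonneg_def)
  obtain d1 where "0 < d1" and d1: "\<And>x y. dist x y < d1 \<Longrightarrow> \<xi> x \<le> \<xi> y + \<eta>"
    using Cc_oscillation_bound[OF \<xi>(1) \<open>\<eta> > 0\<close>] by blast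
  obtain d2 where "0 < d2" and d2: "\<And>x y. dist x y < d2 \<Longrightarrow> \<xi>' x \<le> \<xi>' y + \<eta>"
    using Cc_oscillation_bound[OF \<xi>'(1) \<open>\<eta> > 0\<close>] by blast
  have "0 < min d1 d2 / 2" using \<open>0 < d1\<close> \<open>0 < d2\<close> by simp
  obtain \<delta> where "0 < \<delta>" and \<delta>: "\<And>\<psi> \<gamma> x y. \<gamma> \<in> \<Gamma> \<Longrightarrow> bounded (csupp \<psi>) \<Longrightarrow>
      diameter (csupp \<psi>) < \<delta> \<Longrightarrow> transl \<psi> \<gamma> x \<noteq> 0 \<Longrightarrow> transl \<psi> \<gamma> y \<noteq> 0 \<Longrightarrow> dist x y \<le> min d1 d2 / 2"
    using equicontinuous_small_translate_supports[OF assms(4) \<open>0 < min d1 d2 / 2\<close>] by blast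
  show ?thesis
  proof (intro exI[of _ \<delta>] conjI ballI impI)
    fix \<psi> \<zeta> :: "'a \<Rightarrow> real"
    assume \<psi>: "\<psi> \<in> Cc_pos" "diameter (csupp \<psi>) < \<delta>" and \<zeta>: "\<zeta> \<in> Cc_nonneg_on X0"
    have "bounded (csupp \<psi>)"
      using \<psi>(1) by (auto simp: Cc_pos_def Cc_nonneg_def Cc_def compact_imp_bounded)
    then have near: "dist x y < d1" "dist x y < d2"
      if "\<gamma> \<in> \<Gamma>" "0 < transl \<psi> \<gamma> x" "0 < transl \<psi> \<gamma> y" for \<gamma> x y
      using \<delta>[OF that(1) _ \<psi>(2), of x y] that(2,3) \<open>0 < d1\<close> \<open>0 < d2\<close> by auto
    have osc: "\<xi> x \<le> \<xi> y + \<eta>" "\<xi>' x \<le> \<xi>' y + \<eta>"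
      if "\<gamma> \<in> \<Gamma>" "0 < transl \<psi> \<gamma> x" "0 < transl \<psi> \<gamma> y" for \<gamma> x y
      using d1[OF near(1)[OF that]] d2[OF near(2)[OF that]] .
    have "\<zeta> \<in> Cc_nonneg" using \<zeta> by (simp add: Cc_nonneg_on_def)
    have partition: "\<xi> x + \<xi>' x = 1" if "0 < \<zeta> x" for x
      using csupp_memI[of \<zeta> x] that \<zeta> assms(8,12) by (auto simp: Cc_nonneg_on_def)
    show "L_fun \<Gamma> chi \<psi> (\<lambda>x. \<xi> x * \<zeta> x) + L_fun \<Gamma> chi \<psi> (\<lambda>x. \<xi>' x * \<zeta> x)
            \<le> (1 + 2 * \<eta>) * L_fun \<Gamma> chi \<psi> \<zeta>"
      by (rule L_fun_partition_le[OF assms(2,3) \<open>chi \<in> Cc\<close> \<psi>(1) \<open>\<zeta> \<in> Cc_nonneg\<close> \<xi>(2) \<xi>'(2)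
            partition osc \<open>\<eta> > 0\<close>])
  qed (fact \<open>0 < \<delta>\<close>)
qed

end
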